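(* Let $G$ be a finite simple connected graph with at least one edge, let $W$ be a minimal vertex cover of $G$, and let $s\ge 0$. Let $f=\prod_{y\in V(G)\setminus W} y^{(0)}\in\mathcal{J}_s(R)$. Then $$\langle \mathcal{J}_s(W)\rangle = \mathcal{J}_s(I(G)) : f^{\infty}.$$
   Context: $R=k[x_1,\dots,x_n]$ over a field $k$, with the vertices of $G$ identified with the variables. The edge ideal is $I(G)=\langle x_ix_j : \{x_i,x_j\}\in E(G)\rangle$. A vertex cover is a set of vertices meeting every edge; minimal if no proper subset is a vertex cover. $\mathcal{J}_s(R)=k[x_i^{(l)} : 1\le i\le n,\ 0\le l\le s]$. For $I=\langle f_1,\dots,f_r\rangle\subseteq R$, write $f_m(x_1^{(0)}+x_1^{(1)}t+\cdots+x_1^{(s)}t^s,\dots)\equiv\sum_{l=0}^s\alpha_m^{(l)}t^l \pmod{t^{s+1}}$; then $\mathcal{J}_s(I)=\langle\alpha_m^{(l)}\rangle\subseteq\mathcal{J}_s(R)$. For $W\subseteq V(G)$, $\mathcal{J}_s(W)=\{x^{(j)} : x\in W,\ 0\le j\le s\}$. The saturation is $I:f^\infty=\{g : gf^N\in I \text{ for some } N\ge 0\}$. *)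

theory Defs
  imports "HOL-Library.Poly_Mapping" "HOL-Computational_Algebra.Polynomial"
begin

type_synonym ('v, 'k) mpoly = "('v \<Rightarrow>\<^sub>0 nat) \<Rightarrow>\<^sub>0 'k"

definition Var :: "'v \<Rightarrow> ('v, 'k::comm_ring_1) mpoly" where
  "Var v = Poly_Mapping.single (Poly_Mapping.single v 1) 1"

definition Const :: "'k::comm_ring_1 \<Rightarrow> ('v, 'k) mpoly" where
  "Const c = Poly_Mapping.single 0 c"

text \<open>Polynomial ring k[x_v : v in V] as the set of polynomials using only variables in V.\<close>
definition poly_ring_on :: "'v set \<Rightarrow> ('v, 'k::comm_ring_1) mpoly set" where
  "poly_ring_on V = {p. \<forall>m\<in>Poly_Mapping.keys p. Poly_Mapping.keys m \<subseteq> V}"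

definition eval_mpoly :: "('v \<Rightarrow> 'b::comm_ring_1) \<Rightarrow> ('k::comm_ring_1 \<Rightarrow> 'b) \<Rightarrow> ('v, 'k) mpoly \<Rightarrow> 'b" where
  "eval_mpoly phi iota p = (\<Sum>m\<in>Poly_Mapping.keys p. iota (Poly_Mapping.lookup p m) * (\<Prod>v\<in>Poly_Mapping.keys m. phi v ^ Poly_Mapping.lookup m v))"

definition ideal_in :: "'a::comm_ring_1 set \<Rightarrow> 'a set \<Rightarrow> 'a set" where
  "ideal_in P B = {x. \<exists>F c. finite F \<and> F \<subseteq> B \<and> (\<forall>b\<in>F. c b \<in> P) \<and> x = (\<Sum>b\<in>F. c b * b)}"

definition saturation :: "'a::comm_ring_1 set \<Rightarrow> 'a set \<Rightarrow> 'a \<Rightarrow> 'a set" where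
  "saturation P I f = {g \<in> P. \<exists>N::nat. g * f ^ N \<in> I}"

text \<open>Jet variables x^(l) are represented as Var (x, l). The jet ring J_s(R) for R = k[x_v : v in V].\<close>
definition jet_ring :: "'v set \<Rightarrow> nat \<Rightarrow> ('v \<times> nat, 'k::comm_ring_1) mpoly set" where
  "jet_ring V s = poly_ring_on (V \<times> {0..s})"

definition jet_coeff :: "nat \<Rightarrow> ('v, 'k::comm_ring_1) mpoly \<Rightarrow> nat \<Rightarrow> ('v \<times> nat, 'k) mpoly" where
  "jet_coeff s f l =
     coeff (eval_mpoly (\<lambda>v. \<Sum>j\<le>s. monom (Var (v, j)) j) (\<lambda>c. [:Const c:]) f) l"

text \<open>J_s(I) for I generated by the set Fs, as an ideal of J_s(R).\<close>
definition jet_ideal :: "'v set \<Rightarrow> nat \<Rightarrow> ('v, 'k::comm_ring_1) mpoly set \<Rightarrow> ('v \<times> nat, 'k) mpoly set" where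
  "jet_ideal V s Fs = ideal_in (jet_ring V s) {jet_coeff s f l | f l. f \<in> Fs \<and> l \<le> s}"

definition jet_vars :: "'v set \<Rightarrow> nat \<Rightarrow> ('v \<times> nat, 'k::comm_ring_1) mpoly set" where
  "jet_vars W s = {Var (x, j) | x j. x \<in> W \<and> j \<le> s}"

definition simple_graph :: "'v set \<Rightarrow> 'v set set \<Rightarrow> bool" where
  "simple_graph V E \<longleftrightarrow> finite V \<and> (\<forall>e\<in>E. \<exists>u v. u \<noteq> v \<and> u \<in> V \<and> v \<in> V \<and> e = {u, v})"

definition connected_graph :: "'v set \<Rightarrow> 'v set set \<Rightarrow> bool" where
  "connected_graph V E \<longleftrightarrow> V \<noteq> {} \<and> (\<forall>u\<in>V. \<forall>v\<in>V. (\<lambda>a b. {a, b} \<in> E)\<^sup>*\<^sup>* u v)"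

definition vertex_cover :: "'v set \<Rightarrow> 'v set set \<Rightarrow> 'v set \<Rightarrow> bool" where
  "vertex_cover V E W \<longleftrightarrow> W \<subseteq> V \<and> (\<forall>e\<in>E. e \<inter> W \<noteq> {})"

definition minimal_vertex_cover :: "'v set \<Rightarrow> 'v set set \<Rightarrow> 'v set \<Rightarrow> bool" where
  "minimal_vertex_cover V E W \<longleftrightarrow> vertex_cover V E W \<and> (\<forall>W'. W' \<subset> W \<longrightarrow> \<not> vertex_cover V E W')"

definition edge_gens :: "'v set set \<Rightarrow> ('v, 'k::comm_ring_1) mpoly set" where
  "edge_gens E = {Var i * Var j | i j. {i, j} \<in> E \<and> i \<noteq> j}"

end

theory Submission
  imports Defs
begin

text \<open>
  Write \<open>x\<^sub>j\<close> for the jet variable \<open>x\<^sup>(\<^sup>j\<^sup>)\<close> and \<open>J\<close> for \<open>\<J>\<^sub>s(I(G))\<close>.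
  By minimality every \<open>x \<in> W\<close> has a neighbour \<open>y \<notin> W\<close>. The jets
  \<open>\<Sum>\<^sub>a\<^sub>\<le>\<^sub>l x\<^sub>a y\<^sub>l\<^sub>-\<^sub>a \<in> J\<close> of the edge \<open>xy\<close> form a triangular system in
  \<open>x\<^sub>0, \<dots>, x\<^sub>s\<close> with diagonal \<open>y\<^sub>0\<close>; eliminating gives \<open>x\<^sub>j y\<^sub>0\<^sup>j\<^sup>+\<^sup>1 \<in> J\<close>, and
  \<open>y\<^sub>0\<^sup>j\<^sup>+\<^sup>1\<close> divides \<open>f\<^sup>s\<^sup>+\<^sup>1\<close>. Conversely, as \<open>W\<close> is a vertex cover, every monomial
  of every element of \<open>J\<close> contains some \<open>x\<^sub>j\<close> with \<open>x \<in> W\<close>. Multiplication by the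
  monomial \<open>f\<^sup>N\<close>, which contains no such variable, shifts monomials injectively, so
  every \<open>g\<close> with \<open>g f\<^sup>N \<in> J\<close> has the same property, i.e. \<open>g \<in> \<langle>\<J>\<^sub>s(W)\<rangle>\<close>.
\<close>

definition is_subring :: "'a::comm_ring_1 set \<Rightarrow> bool" where
  "is_subring P \<longleftrightarrow> 0 \<in> P \<and> 1 \<in> P \<and> (\<forall>x\<in>P. \<forall>y\<in>P. x + y \<in> P \<and> x * y \<in> P \<and> - x \<in> P)"

lemma
  assumes "is_subring P"
  shows subring_zero: "0 \<in> P"
    and subring_one: "1 \<in> P"
    and subring_add: "x \<in> P \<Longrightarrow> y \<in> P \<Longrightarrow> x + y \<in> P"
    and subring_mult: "x \<in> P \<Longrightarrow> y \<in> P \<Longrightarrow> x * y \<in> P"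
    and subring_uminus: "x \<in> P \<Longrightarrow> - x \<in> P"
  using assms unfolding is_subring_def by blast+

lemma subring_power: "is_subring P \<Longrightarrow> x \<in> P \<Longrightarrow> x ^ n \<in> P"
  by (induction n) (simp_all add: subring_one subring_mult)

lemma subring_prod: "is_subring P \<Longrightarrow> (\<And>i. i \<in> I \<Longrightarrow> f i \<in> P) \<Longrightarrow> (\<Prod>i\<in>I. f i) \<in> P"
  by (induction I rule: infinite_finite_induct) (simp_all add: subring_one subring_mult)


lemma ideal_in_0: "0 \<in> ideal_in P B"
  unfolding ideal_in_def by (intro CollectI exI[of _ "{}"]) auto

lemma ideal_in_gen: "b \<in> B \<Longrightarrow> c \<in> P \<Longrightarrow> c * b \<in> ideal_in P B"
  unfolding ideal_in_def by (intro CollectI exI[of _ "{b}"] exI[of _ "\<lambda>_. c"]) auto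

lemma ideal_in_add:
  assumes P: "is_subring P" and x: "x \<in> ideal_in P B" and y: "y \<in> ideal_in P B"
  shows "x + y \<in> ideal_in P B"
proof -
  obtain F c where F: "finite F" "F \<subseteq> B" "\<forall>b\<in>F. c b \<in> P" "x = (\<Sum>b\<in>F. c b * b)"
    using x unfolding ideal_in_def by blast
  obtain G d where G: "finite G" "G \<subseteq> B" "\<forall>b\<in>G. d b \<in> P" "y = (\<Sum>b\<in>G. d b * b)"
    using y unfolding ideal_in_def by blast
  define c' where "c' b = (if b \<in> F then c b else 0)" for b
  define d' where "d' b = (if b \<in> G then d b else 0)" for b
  have "x = (\<Sum>b\<in>F \<union> G. c' b * b)"
    unfolding F(4) c'_def by (rule sum.mono_neutral_cong_left) (use F(1) G(1) in auto)
  moreover have "y = (\<Sum>b\<in>F \<union> G. d' b * b)"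
    unfolding G(4) d'_def by (rule sum.mono_neutral_cong_left) (use F(1) G(1) in auto)
  ultimately have "x + y = (\<Sum>b\<in>F \<union> G. (c' b + d' b) * b)"
    by (simp add: sum.distrib distrib_right)
  moreover have "\<forall>b\<in>F \<union> G. c' b + d' b \<in> P"
    using F(3) G(3) by (auto simp: c'_def d'_def intro: subring_add[OF P] subring_zero[OF P])
  ultimately show ?thesis
    unfolding ideal_in_def using F(1,2) G(1,2)
    by (intro CollectI exI[of _ "F \<union> G"] exI[of _ "\<lambda>b. c' b + d' b"]) auto
qed

lemma ideal_in_mult:
  assumes P: "is_subring P" and x: "x \<in> ideal_in P B" and c: "c \<in> P"
  shows "c * x \<in> ideal_in P B"
proof -
  obtain F d where F: "finite F" "F \<subseteq> B" "\<forall>b\<in>F. d b \<in> P" "x = (\<Sum>b\<in>F. d b * b)"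
    using x unfolding ideal_in_def by blast
  have "c * x = (\<Sum>b\<in>F. (c * d b) * b)"
    unfolding F(4) by (simp add: sum_distrib_left mult.assoc)
  moreover have "\<forall>b\<in>F. c * d b \<in> P"
    using F(3) c by (blast intro: subring_mult[OF P])
  ultimately show ?thesis
    unfolding ideal_in_def using F(1,2) by (intro CollectI exI[of _ F] exI[of _ "\<lambda>b. c * d b"]) auto
qed

lemma ideal_in_diff:
  assumes P: "is_subring P" and x: "x \<in> ideal_in P B" and y: "y \<in> ideal_in P B"
  shows "x - y \<in> ideal_in P B"
proof -
  have "(- 1) * y \<in> ideal_in P B"
    by (rule ideal_in_mult[OF P y subring_uminus[OF P subring_one[OF P]]])
  from ideal_in_add[OF P x this] show ?thesis by simp
qed

lemma ideal_in_sum: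
  "is_subring P \<Longrightarrow> (\<And>i. i \<in> I \<Longrightarrow> f i \<in> ideal_in P B) \<Longrightarrow> (\<Sum>i\<in>I. f i) \<in> ideal_in P B"
  by (induction I rule: infinite_finite_induct) (simp_all add: ideal_in_0 ideal_in_add)

lemma ideal_in_least:
  assumes "0 \<in> S" "\<And>x y. x \<in> S \<Longrightarrow> y \<in> S \<Longrightarrow> x + y \<in> S"
    and "\<And>b c. b \<in> B \<Longrightarrow> c \<in> P \<Longrightarrow> c * b \<in> S"
  shows "ideal_in P B \<subseteq> S"
proof
  fix x assume "x \<in> ideal_in P B"
  then obtain F d where F: "finite F" "F \<subseteq> B" "\<forall>b\<in>F. d b \<in> P" "x = (\<Sum>b\<in>F. d b * b)"
    unfolding ideal_in_def by blast
  have "(\<Sum>b\<in>F. d b * b) \<in> S"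
    using F(1-3) by (induction F rule: finite_induct) (simp_all add: assms)
  then show "x \<in> S" using F(4) by simp
qed

lemma ideal_in_subset_subring: "is_subring P \<Longrightarrow> B \<subseteq> P \<Longrightarrow> ideal_in P B \<subseteq> P"
  by (rule ideal_in_least) (auto intro: subring_zero subring_add subring_mult)


lemma keys_add_nat:
  "Poly_Mapping.keys (a + b) = Poly_Mapping.keys a \<union> Poly_Mapping.keys (b :: 'x \<Rightarrow>\<^sub>0 nat)"
  by (auto simp: in_keys_iff lookup_add)

lemma sum_single_lookup:
  "(\<Sum>m\<in>Poly_Mapping.keys p. Poly_Mapping.single m (Poly_Mapping.lookup p m)) = p"
  by (rule poly_mapping_eqI) (simp add: lookup_sum lookup_single when_def in_keys_iff)

lemma Var_mult_Var:
  "Var a * Var b = Poly_Mapping.single (Poly_Mapping.single a 1 + Poly_Mapping.single b 1) (1::'k::comm_ring_1)"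
  unfolding Var_def by (simp add: mult_single)

lemma prod_Var_eq_single:
  "finite S \<Longrightarrow> (\<Prod>i\<in>S. Var (h i) :: ('v, 'k::comm_ring_1) mpoly)
     = Poly_Mapping.single (\<Sum>i\<in>S. Poly_Mapping.single (h i) 1) 1"
  by (induction S rule: finite_induct) (simp_all add: Var_def mult_single)

lemma lookup_mult_single_one:
  "Poly_Mapping.lookup (p * Poly_Mapping.single m 1) (k + m)
     = Poly_Mapping.lookup (p :: ('x \<Rightarrow>\<^sub>0 nat) \<Rightarrow>\<^sub>0 'k::comm_ring_1) k"
proof -
  have shift: "(1 when m = q \<and> k + m = l + q) = ((1 when k = l) when m = q)" for l q
    by (auto simp: when_def)
  have "(\<Sum>q. Poly_Mapping.lookup (Poly_Mapping.single m (1::'k)) q when k + m = l + q)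
      = (1 when k = l)" for l
    unfolding lookup_single when_when shift by (cases "k = l") simp_all
  then show ?thesis
    unfolding lookup_mult by (simp add: mult_when)
qed

lemma poly_ring_on_is_subring: "is_subring (poly_ring_on V :: ('v, 'k::comm_ring_1) mpoly set)"
proof -
  have "p * q \<in> poly_ring_on V" if "p \<in> poly_ring_on V" "q \<in> poly_ring_on V" for p q :: "('v, 'k) mpoly"
    unfolding poly_ring_on_def
  proof (intro CollectI ballI)
    fix m assume "m \<in> Poly_Mapping.keys (p * q)"
    then obtain a b where "m = a + b" "a \<in> Poly_Mapping.keys p" "b \<in> Poly_Mapping.keys q"
      using keys_mult[of p q] by blast
    then show "Poly_Mapping.keys m \<subseteq> V"
      using that unfolding poly_ring_on_def by (simp add: keys_add_nat)
  qed
  moreover have "p + q \<in> poly_ring_on V" if "p \<in> poly_ring_on V" "q \<in> poly_ring_on V" for p q :: "('v, 'k) mpoly"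
    using that keys_add[of p q] unfolding poly_ring_on_def by blast
  moreover have "- p \<in> poly_ring_on V" if "p \<in> poly_ring_on V" for p :: "('v, 'k) mpoly"
    using that unfolding poly_ring_on_def by simp
  moreover have "0 \<in> poly_ring_on V" "1 \<in> poly_ring_on V"
    unfolding poly_ring_on_def by auto
  ultimately show ?thesis
    unfolding is_subring_def by (intro conjI ballI) simp_all
qed

lemma single_in_poly_ring_on:
  "Poly_Mapping.keys m \<subseteq> V \<Longrightarrow> Poly_Mapping.single m c \<in> poly_ring_on V"
  unfolding poly_ring_on_def by auto

lemma Var_in_poly_ring_on: "v \<in> V \<Longrightarrow> (Var v :: ('v, 'k::comm_ring_1) mpoly) \<in> poly_ring_on V"
  unfolding Var_def by (rule single_in_poly_ring_on) auto

text \<open>The monomial ideal of the whole polynomial ring generated by the variables in \<open>A\<close>.\<close>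

definition monomials_meet :: "'v set \<Rightarrow> ('v, 'k::comm_ring_1) mpoly set" where
  "monomials_meet A = {p. \<forall>m\<in>Poly_Mapping.keys p. Poly_Mapping.keys m \<inter> A \<noteq> {}}"

lemma monomials_meet_0: "0 \<in> monomials_meet A"
  unfolding monomials_meet_def by simp

lemma monomials_meet_add: "p \<in> monomials_meet A \<Longrightarrow> q \<in> monomials_meet A \<Longrightarrow> p + q \<in> monomials_meet A"
  unfolding monomials_meet_def using keys_add[of p q] by blast

lemma monomials_meet_mult:
  assumes "p \<in> monomials_meet A"
  shows "c * p \<in> monomials_meet A"
  unfolding monomials_meet_def
proof (intro CollectI ballI)
  fix m assume "m \<in> Poly_Mapping.keys (c * p)"
  then obtain a b where "m = a + b" "b \<in> Poly_Mapping.keys p"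
    using keys_mult[of c p] by blast
  then show "Poly_Mapping.keys m \<inter> A \<noteq> {}"
    using assms unfolding monomials_meet_def by (auto simp: keys_add_nat)
qed

lemma monomials_meet_sum:
  "(\<And>i. i \<in> I \<Longrightarrow> f i \<in> monomials_meet A) \<Longrightarrow> (\<Sum>i\<in>I. f i) \<in> monomials_meet A"
  by (induction I rule: infinite_finite_induct) (simp_all add: monomials_meet_0 monomials_meet_add)

lemma single_in_monomials_meet:
  "Poly_Mapping.keys m \<inter> A \<noteq> {} \<Longrightarrow> Poly_Mapping.single m c \<in> monomials_meet A"
  unfolding monomials_meet_def by auto

lemma monomials_meet_cancel_single:
  assumes pm: "p * Poly_Mapping.single m 1 \<in> monomials_meet A"
    and m: "Poly_Mapping.keys m \<inter> A = {}"
  shows "p \<in> monomials_meet A"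
  unfolding monomials_meet_def
proof (intro CollectI ballI)
  fix k assume "k \<in> Poly_Mapping.keys p"
  then have "k + m \<in> Poly_Mapping.keys (p * Poly_Mapping.single m 1)"
    by (simp add: in_keys_iff lookup_mult_single_one)
  then have "Poly_Mapping.keys (k + m) \<inter> A \<noteq> {}"
    using pm unfolding monomials_meet_def by blast
  then show "Poly_Mapping.keys k \<inter> A \<noteq> {}"
    using m by (auto simp: keys_add_nat)
qed

lemma monomials_meet_cancel_power:
  "p * Poly_Mapping.single m 1 ^ N \<in> monomials_meet A \<Longrightarrow> Poly_Mapping.keys m \<inter> A = {}
    \<Longrightarrow> p \<in> monomials_meet A"
proof (induction N arbitrary: p)
  case (Suc N)
  then have "p * Poly_Mapping.single m 1 \<in> monomials_meet A"
    using Suc.IH[of "p * Poly_Mapping.single m 1"] by (simp add: mult.assoc)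
  then show ?case
    using Suc.prems(2) by (rule monomials_meet_cancel_single)
qed simp

lemma monomials_meet_in_ideal_in_Var:
  assumes pU: "p \<in> poly_ring_on U" and pA: "p \<in> monomials_meet A"
  shows "p \<in> ideal_in (poly_ring_on U) (Var ` (A \<inter> U))"
proof -
  have "Poly_Mapping.single m (Poly_Mapping.lookup p m) \<in> ideal_in (poly_ring_on U) (Var ` (A \<inter> U))"
    if m: "m \<in> Poly_Mapping.keys p" for m
  proof -
    obtain v where v: "v \<in> Poly_Mapping.keys m" "v \<in> A"
      using pA m unfolding monomials_meet_def by blast
    have mU: "Poly_Mapping.keys m \<subseteq> U"
      using pU m unfolding poly_ring_on_def by blast
    define m' where "m' = m - Poly_Mapping.single v 1"
    have "m = m' + Poly_Mapping.single v 1"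
      using v(1) by (intro poly_mapping_eqI)
        (auto simp: m'_def lookup_add lookup_minus lookup_single when_def in_keys_iff)
    then have "Poly_Mapping.single m (Poly_Mapping.lookup p m)
        = Poly_Mapping.single m' (Poly_Mapping.lookup p m) * Var v"
      unfolding Var_def by (simp add: mult_single)
    moreover have "Poly_Mapping.single m' (Poly_Mapping.lookup p m) \<in> poly_ring_on U"
      using mU by (intro single_in_poly_ring_on) (auto simp: m'_def in_keys_iff lookup_minus)
    moreover have "Var v \<in> Var ` (A \<inter> U)"
      using v mU by blast
    ultimately show ?thesis
      by (metis ideal_in_gen)
  qed
  then have "(\<Sum>m\<in>Poly_Mapping.keys p. Poly_Mapping.single m (Poly_Mapping.lookup p m))
      \<in> ideal_in (poly_ring_on U) (Var ` (A \<inter> U))"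
    by (intro ideal_in_sum poly_ring_on_is_subring)
  then show ?thesis
    by (simp only: sum_single_lookup)
qed


subsection \<open>Jets of edge monomials\<close>

lemma jet_ring_is_subring: "is_subring (jet_ring V s :: ('v \<times> nat, 'k::comm_ring_1) mpoly set)"
  unfolding jet_ring_def by (rule poly_ring_on_is_subring)

lemma Var_in_jet_ring: "v \<in> V \<Longrightarrow> j \<le> s \<Longrightarrow> (Var (v, j) :: ('v \<times> nat, 'k::comm_ring_1) mpoly) \<in> jet_ring V s"
  unfolding jet_ring_def by (rule Var_in_poly_ring_on) simp

lemma jet_coeff_Var_mult_Var:
  assumes "i \<noteq> j" "l \<le> s"
  shows "jet_coeff s (Var i * Var j :: ('v, 'k::comm_ring_1) mpoly) l
    = (\<Sum>a\<le>l. Var (i, a) * Var (j, l - a))"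
proof -
  define \<phi> where "\<phi> v = (\<Sum>j\<le>s. monom (Var (v, j) :: ('v \<times> nat, 'k) mpoly) j)" for v
  have coeff_\<phi>: "coeff (\<phi> v) a = (if a \<le> s then Var (v, a) else 0)" for v a
    by (simp add: \<phi>_def coeff_sum)
  define m where "m = Poly_Mapping.single i 1 + Poly_Mapping.single j (1::nat)"
  have "Poly_Mapping.keys m = {i, j}"
    by (auto simp: m_def keys_add_nat)
  moreover have "Poly_Mapping.lookup m i = 1" "Poly_Mapping.lookup m j = 1"
    using assms(1) by (simp_all add: m_def lookup_add lookup_single)
  ultimately have "eval_mpoly \<phi> (\<lambda>c. [:Const c:]) (Var i * Var j :: ('v, 'k) mpoly) = \<phi> i * \<phi> j"
    unfolding Var_mult_Var m_def[symmetric] eval_mpoly_def using assms(1) by (simp add: Const_def)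
  then have "jet_coeff s (Var i * Var j :: ('v, 'k) mpoly) l = coeff (\<phi> i * \<phi> j) l"
    unfolding jet_coeff_def \<phi>_def by simp
  also have "\<dots> = (\<Sum>a\<le>l. coeff (\<phi> i) a * coeff (\<phi> j) (l - a))"
    by (rule coeff_mult)
  also have "\<dots> = (\<Sum>a\<le>l. Var (i, a) * Var (j, l - a))"
    using assms(2) by (intro sum.cong) (simp_all add: coeff_\<phi>)
  finally show ?thesis .
qed

text \<open>
  Eliminating \<open>X 0, \<dots>, X (j - 1)\<close> from the triangular system of Cauchy products:
  \<open>Y 0 ^ j\<close> times the \<open>j\<close>-th product equals \<open>X j * Y 0 ^ Suc j\<close> plus multiples of the
  elements \<open>X a * Y 0 ^ Suc a\<close>, \<open>a < j\<close>, which lie in the ideal by induction.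
\<close>

lemma Cauchy_product_elimination:
  fixes X Y :: "nat \<Rightarrow> 'a::comm_ring_1"
  assumes P: "is_subring P" and Y: "\<And>a. a \<le> s \<Longrightarrow> Y a \<in> P"
    and Cauchy: "\<And>l. l \<le> s \<Longrightarrow> (\<Sum>a\<le>l. X a * Y (l - a)) \<in> ideal_in P B"
    and "j \<le> s"
  shows "X j * Y 0 ^ Suc j \<in> ideal_in P B"
  using \<open>j \<le> s\<close>
proof (induction j rule: less_induct)
  case (less j)
  have Y0: "Y 0 \<in> P" using Y by simp
  define c where "c a = Y (j - a) * Y 0 ^ (j - a - 1)" for a
  have "Y 0 ^ j * (X a * Y (j - a)) = c a * (X a * Y 0 ^ Suc a)" if "a < j" for a
  proof -
    have "Y 0 ^ j = Y 0 ^ (j - a - 1) * Y 0 ^ Suc a"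
      by (subst power_add[symmetric]) (use that in simp)
    then show ?thesis by (simp add: c_def mult_ac)
  qed
  then have "Y 0 ^ j * (\<Sum>a<j. X a * Y (j - a)) = (\<Sum>a<j. c a * (X a * Y 0 ^ Suc a))"
    by (simp add: sum_distrib_left)
  moreover have "(\<Sum>a\<le>j. X a * Y (j - a)) = X j * Y 0 + (\<Sum>a<j. X a * Y (j - a))"
    by (simp add: lessThan_Suc_atMost[symmetric])
  ultimately have "X j * Y 0 ^ Suc j
      = Y 0 ^ j * (\<Sum>a\<le>j. X a * Y (j - a)) - (\<Sum>a<j. c a * (X a * Y 0 ^ Suc a))"
    by (simp add: algebra_simps)
  moreover have "Y 0 ^ j * (\<Sum>a\<le>j. X a * Y (j - a)) \<in> ideal_in P B"
    using less.prems by (intro ideal_in_mult[OF P] Cauchy subring_power[OF P Y0])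
  moreover have "(\<Sum>a<j. c a * (X a * Y 0 ^ Suc a)) \<in> ideal_in P B"
  proof (rule ideal_in_sum[OF P])
    fix a assume "a \<in> {..<j}"
    then have a: "a < j" by simp
    have "X a * Y 0 ^ Suc a \<in> ideal_in P B"
      using less.IH[OF a] less.prems a by simp
    moreover have "c a \<in> P"
      unfolding c_def using less.prems by (intro subring_mult[OF P] subring_power[OF P Y0] Y) simp
    ultimately show "c a * (X a * Y 0 ^ Suc a) \<in> ideal_in P B"
      by (rule ideal_in_mult[OF P])
  qed
  ultimately show ?case
    by (simp add: ideal_in_diff[OF P])
qed


lemma minimal_vertex_cover_outside_neighbour:
  assumes "simple_graph V E" "minimal_vertex_cover V E W" "x \<in> W"
  obtains y where "y \<in> V" "y \<notin> W" "{x, y} \<in> E" "x \<noteq> y"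
proof -
  have cover: "vertex_cover V E W" and "\<not> vertex_cover V E (W - {x})"
    using assms(2,3) unfolding minimal_vertex_cover_def by blast+
  then obtain e where e: "e \<in> E" "e \<inter> (W - {x}) = {}"
    unfolding vertex_cover_def by blast
  with cover have "x \<in> e"
    unfolding vertex_cover_def by blast
  moreover obtain u v where "u \<noteq> v" "u \<in> V" "v \<in> V" "e = {u, v}"
    using assms(1) e(1) unfolding simple_graph_def by blast
  ultimately show ?thesis
    using that e by (auto simp: insert_commute)
qed

lemma jet_var_mult_power_in_jet_ideal:
  assumes "{x, y} \<in> E" "x \<noteq> y" "x \<in> V" "y \<in> V" "j \<le> s"
  shows "Var (x, j) * Var (y, 0) ^ Suc j
    \<in> jet_ideal V s (edge_gens E :: ('v, 'k::comm_ring_1) mpoly set)"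
  unfolding jet_ideal_def
proof (rule Cauchy_product_elimination[OF jet_ring_is_subring _ _ \<open>j \<le> s\<close>])
  show "Var (y, a) \<in> jet_ring V s" if "a \<le> s" for a
    using assms(4) that by (rule Var_in_jet_ring)
  fix l assume l: "l \<le> s"
  have "(Var x * Var y :: ('v, 'k) mpoly) \<in> edge_gens E"
    unfolding edge_gens_def using assms(1,2) by blast
  then have "1 * jet_coeff s (Var x * Var y :: ('v, 'k) mpoly) l
      \<in> ideal_in (jet_ring V s) {jet_coeff s f l | f l. f \<in> edge_gens E \<and> l \<le> s}"
    using l by (intro ideal_in_gen subring_one jet_ring_is_subring) auto
  then show "(\<Sum>a\<le>l. Var (x, a) * Var (y, l - a) :: ('v \<times> nat, 'k) mpoly)
      \<in> ideal_in (jet_ring V s) {jet_coeff s f l | f l. f \<in> edge_gens E \<and> l \<le> s}"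
    by (simp only: jet_coeff_Var_mult_Var[OF assms(2) l] mult_1_left)
qed

lemma jet_var_mult_power_prod_in_jet_ideal:
  assumes G: "simple_graph V E" and W: "minimal_vertex_cover V E W" and "x \<in> W" "j \<le> s"
  shows "Var (x, j) * (\<Prod>y\<in>V - W. Var (y, 0)) ^ Suc s
    \<in> jet_ideal V s (edge_gens E :: ('v, 'k::comm_ring_1) mpoly set)"
proof -
  obtain y where y: "y \<in> V" "y \<notin> W" "{x, y} \<in> E" "x \<noteq> y"
    using minimal_vertex_cover_outside_neighbour[OF G W \<open>x \<in> W\<close>] .
  have "finite V" using G unfolding simple_graph_def by blast
  have "x \<in> V" using W \<open>x \<in> W\<close> unfolding minimal_vertex_cover_def vertex_cover_def by blast
  define r where "r = (\<Prod>z\<in>V - W - {y}. Var (z, 0) :: ('v \<times> nat, 'k) mpoly)"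
  have "(\<Prod>y\<in>V - W. Var (y, 0)) = Var (y, 0) * r"
    unfolding r_def using \<open>finite V\<close> y by (intro prod.remove) auto
  moreover have "Var (y, 0) ^ Suc s = Var (y, 0) ^ Suc j * (Var (y, 0) ^ (s - j) :: ('v \<times> nat, 'k) mpoly)"
    by (subst power_add[symmetric]) (use \<open>j \<le> s\<close> in simp)
  ultimately have "Var (x, j) * (\<Prod>y\<in>V - W. Var (y, 0)) ^ Suc s
      = (Var (y, 0) ^ (s - j) * r ^ Suc s) * (Var (x, j) * Var (y, 0) ^ Suc j)"
    by (simp add: power_mult_distrib mult_ac)
  moreover have "Var (y, 0) ^ (s - j) * r ^ Suc s \<in> jet_ring V s"
    unfolding r_def using y(1)
    by (intro subring_mult subring_power subring_prod jet_ring_is_subring Var_in_jet_ring) auto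
  moreover have "Var (x, j) * Var (y, 0) ^ Suc j \<in> jet_ideal V s (edge_gens E :: ('v, 'k) mpoly set)"
    using y \<open>x \<in> V\<close> \<open>j \<le> s\<close> by (intro jet_var_mult_power_in_jet_ideal) auto
  ultimately show ?thesis
    unfolding jet_ideal_def by (simp add: ideal_in_mult[OF jet_ring_is_subring])
qed

lemma ideal_in_jet_vars_subset_saturation:
  assumes G: "simple_graph V E" and W: "minimal_vertex_cover V E W"
  shows "ideal_in (jet_ring V s) (jet_vars W s :: ('v \<times> nat, 'k::comm_ring_1) mpoly set)
    \<subseteq> saturation (jet_ring V s) (jet_ideal V s (edge_gens E :: ('v, 'k) mpoly set))
        (\<Prod>y\<in>V - W. Var (y, 0))"
proof -
  let ?J = "jet_ideal V s (edge_gens E :: ('v, 'k) mpoly set)"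
  let ?f = "\<Prod>y\<in>V - W. Var (y, 0) :: ('v \<times> nat, 'k) mpoly"
  have WV: "W \<subseteq> V" using W unfolding minimal_vertex_cover_def vertex_cover_def by blast
  have "c * b * ?f ^ Suc s \<in> ?J" if "b \<in> jet_vars W s" "c \<in> jet_ring V s" for b c
    using that jet_var_mult_power_prod_in_jet_ideal[OF G W] unfolding jet_vars_def jet_ideal_def
    by (auto simp: mult.assoc intro: ideal_in_mult[OF jet_ring_is_subring])
  then have "ideal_in (jet_ring V s) (jet_vars W s) \<subseteq> {g. g * ?f ^ Suc s \<in> ?J}"
    unfolding jet_ideal_def
    by (intro ideal_in_least) (auto simp: ideal_in_0 distrib_right intro: ideal_in_add[OF jet_ring_is_subring])
  moreover have "ideal_in (jet_ring V s) (jet_vars W s) \<subseteq> jet_ring V s"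
    using WV by (intro ideal_in_subset_subring jet_ring_is_subring) (auto simp: jet_vars_def intro: Var_in_jet_ring)
  ultimately show ?thesis
    unfolding saturation_def by blast
qed

lemma jet_ideal_subset_monomials_meet:
  assumes "vertex_cover V E W"
  shows "jet_ideal V s (edge_gens E :: ('v, 'k::comm_ring_1) mpoly set) \<subseteq> monomials_meet (W \<times> UNIV)"
  unfolding jet_ideal_def
proof (rule ideal_in_least)
  fix b c :: "('v \<times> nat, 'k) mpoly"
  assume "b \<in> {jet_coeff s f l | f l. f \<in> edge_gens E \<and> l \<le> s}"
  then obtain i j l where ij: "{i, j} \<in> E" "i \<noteq> j" "l \<le> s"
    and b: "b = jet_coeff s (Var i * Var j) l"
    unfolding edge_gens_def by blast
  have "{i, j} \<inter> W \<noteq> {}"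
    using assms ij(1) unfolding vertex_cover_def by blast
  then have "i \<in> W \<or> j \<in> W"
    by blast
  moreover have "Poly_Mapping.keys (Poly_Mapping.single (i, a) 1 + Poly_Mapping.single (j, l - a) (1::nat))
      = {(i, a), (j, l - a)}" for a
    by (auto simp: keys_add_nat)
  ultimately have "Var (i, a) * Var (j, l - a) \<in> monomials_meet (W \<times> UNIV)" for a
    unfolding Var_mult_Var by (intro single_in_monomials_meet) auto
  then have "b \<in> monomials_meet (W \<times> UNIV)"
    unfolding b jet_coeff_Var_mult_Var[OF ij(2,3)] by (intro monomials_meet_sum)
  then show "c * b \<in> monomials_meet (W \<times> UNIV)"
    by (rule monomials_meet_mult)
qed (auto intro: monomials_meet_0 monomials_meet_add)

lemma saturation_subset_ideal_in_jet_vars: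
  assumes "finite V" and cover: "vertex_cover V E W"
  shows "saturation (jet_ring V s) (jet_ideal V s (edge_gens E :: ('v, 'k::comm_ring_1) mpoly set))
        (\<Prod>y\<in>V - W. Var (y, 0))
    \<subseteq> ideal_in (jet_ring V s) (jet_vars W s)"
proof
  fix g assume "g \<in> saturation (jet_ring V s) (jet_ideal V s (edge_gens E :: ('v, 'k) mpoly set))
    (\<Prod>y\<in>V - W. Var (y, 0))"
  then obtain N where g: "g \<in> jet_ring V s"
    and gN: "g * (\<Prod>y\<in>V - W. Var (y, 0)) ^ N \<in> jet_ideal V s (edge_gens E :: ('v, 'k) mpoly set)"
    unfolding saturation_def by blast
  define m where "m = (\<Sum>y\<in>V - W. Poly_Mapping.single (y, 0::nat) (1::nat))"
  have "(\<Prod>y\<in>V - W. Var (y, 0)) = Poly_Mapping.single m (1::'k)"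
    unfolding m_def using \<open>finite V\<close> by (simp add: prod_Var_eq_single)
  then have "g * Poly_Mapping.single m 1 ^ N \<in> monomials_meet (W \<times> UNIV)"
    using gN jet_ideal_subset_monomials_meet[OF cover] by auto
  moreover have "Poly_Mapping.keys m \<inter> W \<times> UNIV = {}"
    using keys_sum[of "\<lambda>y. Poly_Mapping.single (y, 0::nat) (1::nat)" "V - W"] by (auto simp: m_def)
  ultimately have "g \<in> monomials_meet (W \<times> UNIV)"
    by (rule monomials_meet_cancel_power)
  then have "g \<in> ideal_in (jet_ring V s) (Var ` (W \<times> UNIV \<inter> V \<times> {0..s}))"
    using g unfolding jet_ring_def by (rule monomials_meet_in_ideal_in_Var[rotated])
  moreover have "Var ` (W \<times> UNIV \<inter> V \<times> {0..s}) = (jet_vars W s :: ('v \<times> nat, 'k) mpoly set)"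
    using cover unfolding jet_vars_def vertex_cover_def by fastforce
  ultimately show "g \<in> ideal_in (jet_ring V s) (jet_vars W s)"
    by simp
qed

theorem mainTheorem2:
  fixes V :: "'v set" and E :: "'v set set" and W :: "'v set" and s :: nat
  assumes "simple_graph V E"
    and "connected_graph V E"
    and "E \<noteq> {}"
    and "minimal_vertex_cover V E W"
  shows "ideal_in (jet_ring V s) (jet_vars W s :: ('v \<times> nat, 'k::field) mpoly set)
       = saturation (jet_ring V s) (jet_ideal V s (edge_gens E :: ('v, 'k) mpoly set))
           (\<Prod>y\<in>V - W. Var (y, 0))"
proof
  show "ideal_in (jet_ring V s) (jet_vars W s) \<subseteq> saturation (jet_ring V s)
      (jet_ideal V s (edge_gens E :: ('v, 'k) mpoly set)) (\<Prod>y\<in>V - W. Var (y, 0))"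
    using assms(1,4) by (rule ideal_in_jet_vars_subset_saturation)
  have "finite V" "vertex_cover V E W"
    using assms(1,4) unfolding simple_graph_def minimal_vertex_cover_def by blast+
  then show "saturation (jet_ring V s) (jet_ideal V s (edge_gens E :: ('v, 'k) mpoly set))
      (\<Prod>y\<in>V - W. Var (y, 0)) \<subseteq> ideal_in (jet_ring V s) (jet_vars W s)"
    by (rule saturation_subset_ideal_in_jet_vars)
qed

end
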